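(* For $n\in\mathbb{N}$ let $X_n$ be an integer-valued random variable with $\mathbb{P}[X_n=k]=\frac{B(n,k)}{2^nn!}$, $k=0,\dots,n$, where $(t+1)(t+3)\cdots(t+2n-1)=\sum_{k=0}^nB(n,k)t^k$. Then, locally uniformly in $z\in\mathbb{C}$, $$\lim_{n\to\infty}\frac{\mathbb{E}[e^{zX_n}]}{e^{(\frac12\log n)(e^z-1)}}=\frac{2^{e^z}\,\Gamma(\frac12e^z)}{2\sqrt{\pi}\,\Gamma(e^z)}.$$ *)

theory Defs
  imports "HOL-Probability.Probability" "HOL-Computational_Algebra.Polynomial"
begin

definition B :: "nat \<Rightarrow> nat \<Rightarrow> nat" where
  "B n k = coeff (\<Prod>j<n. [:2 * j + 1, 1:]) k"

definition limit_expr :: "complex \<Rightarrow> complex" where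
  "limit_expr z = (2 powr exp z) * Gamma (exp z / 2)
                  / (2 * complex_of_real (sqrt pi) * Gamma (exp z))"

text \<open>At points where Gamma(e^z) has a pole (e^z a nonpositive integer) the paper's
  expression is understood as its (removable) limit value.\<close>
definition limit_fun :: "complex \<Rightarrow> complex" where
  "limit_fun z = (if exp z \<in> \<int>\<^sub>\<le>\<^sub>0 then Lim (at z) limit_expr else limit_expr z)"

end

theory Submission
  imports Defs "HOL-Analysis.Analysis"
begin

text \<open>
  The generating polynomial of \<open>B n\<close> gives \<open>E[e^(zX_n)] = (a)_n / n!\<close> with
  \<open>a = (e^z + 1) / 2\<close>, so the normalised moment generating function is
  \<open>(a)_n n^(1 - a) / n!\<close>, which tends to \<open>1 / \<Gamma>(a)\<close> by Gauss's product formula.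
  The convergence is locally uniform in \<open>a\<close> because the consecutive quotients
  \<open>(a + k) / (k + 1) \<cdot> ((k + 1) / k)^(1 - a)\<close> are \<open>1 + O(1/k^2)\<close> uniformly on compact
  sets, so the Weierstrass M-test applies to the infinite product.  Legendre's duplication
  formula turns \<open>1 / \<Gamma>((w + 1) / 2)\<close> into the stated expression in \<open>w = e^z\<close>; at the
  removable singularities (\<open>w\<close> a nonpositive integer) both sides agree by continuity.
\<close>

lemma coeff_mult_monic_linear:
  fixes p :: "'a::comm_semiring_1 poly"
  shows "coeff (p * [:c, 1:]) 0 = c * coeff p 0"
    and "coeff (p * [:c, 1:]) (Suc k) = c * coeff p (Suc k) + coeff p k"
  by (simp_all add: mult.commute[of p] mult_pCons_left)

lemma of_nat_coeff_prod_monic_linear: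
  fixes c :: "nat \<Rightarrow> nat"
  shows "of_nat (coeff (\<Prod>j<n. [:c j, 1:]) k) = (coeff (\<Prod>j<n. [:of_nat (c j), 1:]) k :: 'a::comm_semiring_1)"
proof (induction n arbitrary: k)
  case 0
  then show ?case by (cases k) simp_all
next
  case (Suc n)
  then show ?case by (cases k) (simp_all add: coeff_mult_monic_linear)
qed

lemma degree_prod_monic_linear_le: "degree (\<Prod>j<(n::nat). [:c j, 1:] :: 'a::comm_semiring_1 poly) \<le> n"
  using degree_prod_sum_le[of "{..<n}" "\<lambda>j. [:c j, 1:] :: 'a poly"] by (simp add: o_def)

lemma B_eq_0: "n < k \<Longrightarrow> B n k = 0"
  unfolding B_def using degree_prod_monic_linear_le[where c="\<lambda>j. 2 * j + 1" and n=n]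
  by (intro coeff_eq_0) simp

lemma sum_B_mult_power:
  "(\<Sum>k\<le>n. of_nat (B n k) * w ^ k) = (\<Prod>j<n. w + of_nat (2 * j + 1) :: 'a::comm_semiring_1)"
proof -
  define Q :: "'a poly" where "Q = (\<Prod>j<n. [:of_nat (2 * j + 1), 1:])"
  have "(\<Sum>k\<le>n. of_nat (B n k) * w ^ k) = (\<Sum>k\<le>n. coeff Q k * w ^ k)"
    unfolding B_def Q_def of_nat_coeff_prod_monic_linear ..
  also have "\<dots> = poly Q w"
    unfolding poly_altdef using degree_prod_monic_linear_le[where n=n]
    by (intro sum.mono_neutral_right) (auto simp: Q_def coeff_eq_0)
  also have "\<dots> = (\<Prod>j<n. w + of_nat (2 * j + 1))"
    by (simp add: Q_def poly_prod add.commute)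
  finally show ?thesis .
qed

lemma prod_odd_shift_eq_pochhammer:
  "(\<Prod>j<n. w + of_nat (2 * j + 1)) = 2 ^ n * pochhammer ((w + 1) / 2) n"
  for w :: "'a::field_char_0"
proof -
  have "(\<Prod>j<n. w + of_nat (2 * j + 1)) = (\<Prod>j<n. 2 * ((w + 1) / 2 + of_nat j))"
    by (intro prod.cong) (simp_all add: field_simps)
  also have "\<dots> = 2 ^ n * pochhammer ((w + 1) / 2) n"
    by (simp only: prod.distrib) (simp add: pochhammer_prod atLeast0LessThan)
  finally show ?thesis .
qed

lemma expectation_exp_mult_eq_pochhammer:
  fixes X :: "nat pmf" and z :: complex
  assumes pmf_X: "\<And>k. pmf X k = real (B n k) / (2 ^ n * fact n)"
  shows "measure_pmf.expectation X (\<lambda>k. exp (z * of_nat k)) = pochhammer ((exp z + 1) / 2) n / fact n"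
proof -
  have "measure_pmf.expectation X (\<lambda>k. exp (z * of_nat k)) = (\<Sum>k\<le>n. pmf X k *\<^sub>R exp (z * of_nat k))"
  proof (rule integral_measure_pmf)
    show "k \<in> {..n}" if "k \<in> set_pmf X" for k
      using that B_eq_0[of n k] by (fastforce simp: set_pmf_iff pmf_X)
  qed simp
  also have "\<dots> = (\<Sum>k\<le>n. of_nat (B n k) * exp z ^ k) / (2 ^ n * fact n)"
    unfolding sum_divide_distrib
    by (intro sum.cong) (simp_all add: pmf_X scaleR_conv_of_real exp_of_nat_mult[symmetric] mult.commute)
  also have "\<dots> = pochhammer ((exp z + 1) / 2) n / fact n"
    unfolding sum_B_mult_power prod_odd_shift_eq_pochhammer by simp
  finally show ?thesis .
qed

definition rGamma_seq :: "nat \<Rightarrow> complex \<Rightarrow> complex" where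
  "rGamma_seq n a = pochhammer a n / fact n * exp ((1 - a) * of_real (ln (real n)))"

definition rGamma_seq_factor :: "nat \<Rightarrow> complex \<Rightarrow> complex" where
  "rGamma_seq_factor k a =
     (a + of_nat k) / (of_nat k + 1) * exp ((1 - a) * of_real (ln (real k + 1) - ln (real k)))"

lemma rGamma_seq_Suc:
  assumes "k \<ge> 1"
  shows "rGamma_seq (Suc k) a = rGamma_seq k a * rGamma_seq_factor k a"
proof -
  have log_split: "(1 - a) * of_real (ln (real (Suc k))) =
        (1 - a) * of_real (ln (real k)) + (1 - a) * of_real (ln (real k + 1) - ln (real k))"
    by (simp add: algebra_simps)
  show ?thesis
    unfolding rGamma_seq_def rGamma_seq_factor_def log_split exp_add pochhammer_Suc fact_Suc
    by (simp add: field_simps)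
qed

lemma rGamma_seq_Suc_eq_prod: "rGamma_seq (Suc N) a = a * (\<Prod>k<N. rGamma_seq_factor (Suc k) a)"
proof (induction N)
  case 0
  then show ?case by (simp add: rGamma_seq_def)
next
  case (Suc N)
  then show ?case by (simp add: rGamma_seq_Suc[of "Suc N"] mult.assoc)
qed

lemma rGamma_series_eq_rGamma_seq:
  "n > 0 \<Longrightarrow> rGamma_series a n = rGamma_seq n a * (1 + a / of_nat n)"
  by (simp add: rGamma_series_def rGamma_seq_def pochhammer_Suc exp_diff exp_of_real
      algebra_simps add_divide_distrib)

lemma rGamma_seq_LIMSEQ: "(\<lambda>n. rGamma_seq n a) \<longlonglongrightarrow> rGamma a"
proof -
  have lim: "(\<lambda>n. 1 + a / of_nat n) \<longlonglongrightarrow> 1"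
    using tendsto_add[OF tendsto_const tendsto_mult_left[OF lim_inverse_n, of a]]
    by (simp add: divide_inverse)
  have "eventually (\<lambda>n. n > 0 \<and> 1 + a / of_nat n \<noteq> 0) sequentially"
    using eventually_gt_at_top tendsto_imp_eventually_ne[OF lim] by (intro eventually_conj) auto
  then have "eventually (\<lambda>n. rGamma_seq n a = rGamma_series a n / (1 + a / of_nat n)) sequentially"
    by (rule eventually_mono) (simp add: rGamma_series_eq_rGamma_seq)
  moreover have "(\<lambda>n. rGamma_series a n / (1 + a / of_nat n)) \<longlonglongrightarrow> rGamma a"
    using tendsto_divide[OF rGamma_series_LIMSEQ lim] by simp
  ultimately show ?thesis
    by (simp add: tendsto_cong)
qed

lemma ln_add_one_minus_ln_approx:
  fixes x :: real
  assumes "x > 0"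
  shows "\<bar>ln (x + 1) - ln x - 1 / (x + 1)\<bar> \<le> 1 / x ^ 2"
proof -
  have "ln (x / (x + 1)) \<le> x / (x + 1) - 1"
    using assms by (intro ln_le_minus_one) simp
  then have lower: "1 / (x + 1) \<le> ln (x + 1) - ln x"
    using assms by (simp add: ln_div field_simps)
  have "ln ((x + 1) / x) \<le> (x + 1) / x - 1"
    using assms by (intro ln_le_minus_one) simp
  then have "ln (x + 1) - ln x \<le> 1 / x"
    using assms by (simp add: ln_div field_simps)
  with lower have "\<bar>ln (x + 1) - ln x - 1 / (x + 1)\<bar> \<le> 1 / x - 1 / (x + 1)"
    by linarith
  also have "\<dots> = 1 / (x * (x + 1))"
    using assms by (simp add: field_simps)
  also have "\<dots> \<le> 1 / x ^ 2"
    using assms by (intro divide_left_mono) (simp_all add: power2_eq_square)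
  finally show ?thesis .
qed

lemma norm_Ln_add_one_minus_le:
  fixes u :: complex
  assumes "norm u \<le> 1 / 2"
  shows "norm (Ln (1 + u) - u) \<le> 2 * norm u ^ 2"
proof -
  have "norm (Ln (1 + u) - u) \<le> norm u ^ 2 / (1 - norm u)"
    using assms by (intro Ln_approx_linear) simp
  also have "\<dots> \<le> norm u ^ 2 / (1 / 2)"
    using assms by (intro divide_left_mono) auto
  finally show ?thesis
    by simp
qed

lemma rGamma_seq_factor_eq_exp_Ln:
  fixes a :: complex and k :: nat
  defines "u \<equiv> (a - 1) / (of_nat k + 1)"
  assumes "1 + u \<noteq> 0"
  shows "rGamma_seq_factor k a = exp (Ln (1 + u) - (a - 1) * of_real (ln (real k + 1) - ln (real k)))"
proof -
  have "(of_nat k + 1 :: complex) \<noteq> 0"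
    by (metis of_nat_Suc of_nat_neq_0 add.commute)
  then have "(a + of_nat k) / (of_nat k + 1) = 1 + u"
    unfolding u_def by (simp add: field_simps)
  then have "rGamma_seq_factor k a = (1 + u) * exp (- (a - 1) * of_real (ln (real k + 1) - ln (real k)))"
    unfolding rGamma_seq_factor_def by simp
  also have "\<dots> = exp (Ln (1 + u) - (a - 1) * of_real (ln (real k + 1) - ln (real k)))"
    by (simp only: diff_conv_add_uminus exp_add exp_Ln[OF assms(2)] minus_mult_left)
  finally show ?thesis .
qed

lemma rGamma_seq_factor_eq_exp_small:
  fixes a :: complex
  assumes R: "norm (a - 1) \<le> R" and k: "1 \<le> k" "2 * R \<le> real k"
  obtains t where "rGamma_seq_factor k a = exp t" "norm t \<le> (2 * R^2 + R) / real k ^ 2"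
proof -
  define b where "b = a - 1"
  define u where "u = b / (of_nat k + 1)"
  define L where "L = ln (real k + 1) - ln (real k)"
  have k0: "real k > 0"
    using k by simp
  have R0: "R \<ge> 0"
    using R norm_ge_zero order_trans by blast
  have "norm u = norm b / (real k + 1)"
    unfolding u_def norm_divide by (metis norm_of_nat of_nat_Suc add.commute)
  also have "\<dots> \<le> R / real k"
    using R R0 k0 unfolding b_def by (intro frac_le) auto
  finally have u_le: "norm u \<le> R / real k" .
  moreover have "R / real k \<le> 1 / 2"
    using k k0 by (simp add: field_simps)
  ultimately have u_half: "norm u \<le> 1 / 2"
    by linarith
  then have "1 + u \<noteq> 0"
    by (auto simp: add_eq_0_iff)
  then have factor_eq: "rGamma_seq_factor k a = exp (Ln (1 + u) - b * of_real L)"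
    unfolding u_def b_def L_def by (rule rGamma_seq_factor_eq_exp_Ln)
  have "norm (Ln (1 + u) - u) \<le> 2 * norm u ^ 2"
    using u_half by (rule norm_Ln_add_one_minus_le)
  also have "\<dots> \<le> 2 * (R / real k) ^ 2"
    using u_le by (simp add: power_mono)
  finally have Ln_err: "norm (Ln (1 + u) - u) \<le> 2 * R^2 / real k ^ 2"
    by (simp add: power_divide)
  have "\<bar>1 / (real k + 1) - L\<bar> \<le> 1 / real k ^ 2"
    using ln_add_one_minus_ln_approx[OF k0] unfolding L_def by linarith
  then have L_err: "norm (b * of_real (1 / (real k + 1) - L)) \<le> R * (1 / real k ^ 2)"
    unfolding norm_mult norm_of_real using R R0 unfolding b_def
    by (intro mult_mono) simp_all
  (* Both summands of the exponent below are O(1/k^2): a quadratic Taylor remainder and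
     the error of 1/(k+1) as an approximation of ln (k+1) - ln k. *)
  have "u = b * of_real (1 / (real k + 1))"
    by (simp add: u_def divide_inverse)
  then have "Ln (1 + u) - b * of_real L = (Ln (1 + u) - u) + b * of_real (1 / (real k + 1) - L)"
    by (simp add: right_diff_distrib)
  also have "norm \<dots> \<le> norm (Ln (1 + u) - u) + norm (b * of_real (1 / (real k + 1) - L))"
    by (rule norm_triangle_ineq)
  also have "\<dots> \<le> 2 * R^2 / real k ^ 2 + R * (1 / real k ^ 2)"
    using Ln_err L_err by (rule add_mono)
  also have "\<dots> = (2 * R^2 + R) / real k ^ 2"
    by (simp add: add_divide_distrib)
  finally show ?thesis
    using that factor_eq by simp
qed

lemma continuous_on_rGamma_seq_factor: "continuous_on A (rGamma_seq_factor k)"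
  unfolding rGamma_seq_factor_def
  by (intro continuous_intros) (metis of_nat_Suc of_nat_neq_0 add.commute)

lemma norm_rGamma_seq_factor_minus_1_le:
  fixes a :: complex
  assumes "norm (a - 1) \<le> R" "1 \<le> k" "2 * R \<le> real k"
  shows "norm (rGamma_seq_factor k a - 1) \<le> (2 * R^2 + R) * exp (2 * R^2 + R) / real k ^ 2"
proof -
  define C where "C = 2 * R^2 + R"
  obtain t where t: "rGamma_seq_factor k a = exp t" "norm t \<le> C / real k ^ 2"
    using rGamma_seq_factor_eq_exp_small[OF assms] unfolding C_def by blast
  have "R \<ge> 0"
    using assms(1) norm_ge_zero order_trans by blast
  then have "C / real k ^ 2 \<le> C / 1"
    using assms(2) unfolding C_def by (intro divide_left_mono) simp_all
  then have C_le: "C / real k ^ 2 \<le> C"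
    by simp
  have "norm (exp t - 1) \<le> exp (norm t) * norm t"
    using Taylor_exp_field[of t 0] by simp
  also have "\<dots> \<le> exp C * (C / real k ^ 2)"
    using t(2) C_le by (intro mult_mono) simp_all
  finally show ?thesis
    unfolding t(1) C_def by (simp add: mult.commute)
qed

lemma uniformly_convergent_on_prod_rGamma_seq_factor:
  assumes "compact A"
  shows "uniformly_convergent_on A (\<lambda>N a. \<Prod>k<N. rGamma_seq_factor (Suc k) a)"
proof -
  obtain R where R: "\<And>a. a \<in> A \<Longrightarrow> norm (a - 1) \<le> R"
    using compact_imp_bounded[OF assms] unfolding bounded_iff
    by (metis add.commute norm_one norm_triangle_ineq4 order.trans add_right_mono)
  define M where "M = (\<lambda>k. (2 * R^2 + R) * exp (2 * R^2 + R) / real (Suc k) ^ 2)"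
  have "summable (\<lambda>k. inverse (real (Suc k) ^ 2))"
    by (rule summable_Suc_iff[THEN iffD2], rule inverse_power_summable) simp
  then have "summable M"
    unfolding M_def divide_inverse by (rule summable_mult)
  moreover have "eventually (\<lambda>k. \<forall>a\<in>A. norm (norm (rGamma_seq_factor (Suc k) a - 1)) \<le> M k) sequentially"
    using eventually_ge_at_top[of "nat \<lceil>2 * R\<rceil>"]
  proof eventually_elim
    case (elim k)
    show ?case
    proof
      fix a assume "a \<in> A"
      show "norm (norm (rGamma_seq_factor (Suc k) a - 1)) \<le> M k"
        unfolding M_def real_norm_def abs_norm_cancel using elim
        by (intro norm_rGamma_seq_factor_minus_1_le R \<open>a \<in> A\<close>) simp_all
    qed
  qed
  ultimately have "uniformly_convergent_on A (\<lambda>N a. \<Sum>k<N. norm (rGamma_seq_factor (Suc k) a - 1))"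
    by (rule Weierstrass_m_test'_ev[rotated])
  then show ?thesis
    by (intro uniformly_convergent_on_prod' assms continuous_on_rGamma_seq_factor)
qed

lemma uniform_limit_rGamma_seq:
  assumes "compact A"
  shows "uniform_limit A rGamma_seq rGamma sequentially"
proof -
  obtain P where P: "uniform_limit A (\<lambda>N a. \<Prod>k<N. rGamma_seq_factor (Suc k) a) P sequentially"
    using uniformly_convergent_on_prod_rGamma_seq_factor[OF assms]
    by (auto simp: uniformly_convergent_on_def)
  have "continuous_on A P"
    by (rule uniform_limit_theorem[OF _ P])
       (simp_all add: always_eventually continuous_on_prod continuous_on_rGamma_seq_factor)
  then have "bounded (P ` A)"
    using assms by (intro compact_imp_bounded compact_continuous_image)
  moreover have "bounded ((\<lambda>a. a) ` A)"
    using assms by (simp add: compact_imp_bounded)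
  ultimately have "uniform_limit A (\<lambda>N a. a * (\<Prod>k<N. rGamma_seq_factor (Suc k) a)) (\<lambda>a. a * P a) sequentially"
    by (intro uniform_lim_mult[OF uniform_limit_const P])
  then have lim: "uniform_limit A rGamma_seq (\<lambda>a. a * P a) sequentially"
    unfolding rGamma_seq_Suc_eq_prod[symmetric] by (rule filterlim_sequentially_Suc[THEN iffD1])
  have "a * P a = rGamma a" if "a \<in> A" for a
    using tendsto_uniform_limitI[OF lim that] rGamma_seq_LIMSEQ by (rule LIMSEQ_unique)
  then show ?thesis
    using lim uniform_limit_cong'[of A rGamma_seq rGamma_seq "\<lambda>a. a * P a" rGamma] by simp
qed

lemma Gamma_duplication_rGamma:
  fixes w :: complex
  assumes w: "w \<notin> \<int>\<^sub>\<le>\<^sub>0"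
  shows "2 powr w * Gamma (w / 2) / (2 * of_real (sqrt pi) * Gamma w) = rGamma ((w + 1) / 2)"
proof -
  define L where "L = complex_of_real (ln 2)"
  have "w / 2 \<notin> \<int>\<^sub>\<le>\<^sub>0"
    using w nonpos_Ints_add[of "w / 2" "w / 2"] by auto
  moreover have "(w + 1) / 2 \<notin> \<int>\<^sub>\<le>\<^sub>0"
  proof
    assume "(w + 1) / 2 \<in> \<int>\<^sub>\<le>\<^sub>0"
    then have "(w + 1) / 2 + ((w + 1) / 2 + (-1)) \<in> \<int>\<^sub>\<le>\<^sub>0"
      by (intro nonpos_Ints_add) auto
    also have "(w + 1) / 2 + ((w + 1) / 2 + (-1)) = w"
      by (simp add: field_simps)
    finally show False
      using w by simp
  qed
  ultimately have "Gamma (w / 2) * Gamma ((w + 1) / 2) = exp ((1 - w) * L) * of_real (sqrt pi) * Gamma w"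
    using Gamma_legendre_duplication[of "w / 2"] by (simp add: L_def add_divide_distrib)
  moreover have "2 powr w * exp ((1 - w) * L) = 2"
  proof -
    have "2 powr w = exp (w * L)"
      using Ln_of_real[of 2] by (simp add: powr_def L_def)
    then show ?thesis
      by (simp add: L_def exp_add[symmetric] algebra_simps exp_of_real)
  qed
  moreover have "Gamma w \<noteq> 0" "Gamma ((w + 1) / 2) \<noteq> 0"
    using w \<open>(w + 1) / 2 \<notin> \<int>\<^sub>\<le>\<^sub>0\<close> by (simp_all add: Gamma_eq_zero_iff)
  ultimately show ?thesis
    by (simp add: rGamma_inverse_Gamma field_simps)
qed

lemma limit_expr_eq_rGamma: "exp z \<notin> \<int>\<^sub>\<le>\<^sub>0 \<Longrightarrow> limit_expr z = rGamma ((exp z + 1) / 2)"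
  unfolding limit_expr_def by (rule Gamma_duplication_rGamma)

lemma eventually_exp_notin_nonpos_Ints:
  fixes z :: complex
  assumes z: "exp z \<in> \<int>\<^sub>\<le>\<^sub>0"
  shows "eventually (\<lambda>u. exp u \<notin> \<int>\<^sub>\<le>\<^sub>0) (at z)"
proof -
  have "eventually (\<lambda>u. dist (exp u) (exp z) < 1) (at z)"
    using isContD[OF isCont_exp[of z]] by (rule tendstoD) simp
  moreover have "eventually (\<lambda>u. u \<in> ball z pi \<and> u \<noteq> z \<and> u \<in> UNIV) (at z)"
    by (rule eventually_at_ball') simp
  ultimately show ?thesis
  proof eventually_elim
    case (elim u)
    show "exp u \<notin> \<int>\<^sub>\<le>\<^sub>0"
    proof
      assume "exp u \<in> \<int>\<^sub>\<le>\<^sub>0"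
      with z obtain m n where "exp u = of_int m" "exp z = of_int n"
        by (metis nonpos_Ints_cases)
      with elim have "exp u = exp z"
        by (simp add: dist_of_int)
      then have "u = z"
        by (rule inj_onD[OF inj_on_exp_pi[of z]]) (use elim in auto)
      with elim show False
        by simp
    qed
  qed
qed

lemma limit_fun_eq_rGamma: "limit_fun z = rGamma ((exp z + 1) / 2)"
proof (cases "exp z \<in> \<int>\<^sub>\<le>\<^sub>0")
  case False
  then show ?thesis
    by (simp add: limit_fun_def limit_expr_eq_rGamma)
next
  case True
  have "isCont (\<lambda>u. rGamma ((exp u + 1) / 2)) z"
    by (intro continuous_intros) auto
  then have "((\<lambda>u. rGamma ((exp u + 1) / 2)) \<longlongrightarrow> rGamma ((exp z + 1) / 2)) (at z)"
    by (rule isContD)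
  moreover have "eventually (\<lambda>u. rGamma ((exp u + 1) / 2) = limit_expr u) (at z)"
    using eventually_exp_notin_nonpos_Ints[OF True] by eventually_elim (simp add: limit_expr_eq_rGamma)
  ultimately have "(limit_expr \<longlongrightarrow> rGamma ((exp z + 1) / 2)) (at z)"
    by (simp add: tendsto_cong)
  then show ?thesis
    by (simp add: limit_fun_def True tendsto_Lim)
qed

lemma expectation_exp_mult_div_eq_rGamma_seq:
  fixes X :: "nat pmf" and z :: complex
  assumes "\<And>k. pmf X k = real (B n k) / (2 ^ n * fact n)"
  shows "measure_pmf.expectation X (\<lambda>k. exp (z * of_nat k))
           / exp (complex_of_real (ln (real n) / 2) * (exp z - 1))
         = rGamma_seq n ((exp z + 1) / 2)"
proof -
  have exponent: "(1 - (exp z + 1) / 2) * of_real (ln (real n)) = - (of_real (ln (real n) / 2) * (exp z - 1))"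
    by (simp add: field_simps)
  show ?thesis
    unfolding expectation_exp_mult_eq_pochhammer[OF assms] rGamma_seq_def exponent exp_minus
    by (simp only: divide_inverse)
qed

theorem lemma5p3:
  fixes X :: "nat \<Rightarrow> nat pmf"
  assumes "\<And>n k. pmf (X n) k = real (B n k) / (2 ^ n * fact n)"
  shows "\<And>K. compact K \<Longrightarrow>
    uniform_limit K
      (\<lambda>n z. measure_pmf.expectation (X n) (\<lambda>k. exp (z * of_nat k))
              / exp (complex_of_real (ln (real n) / 2) * (exp z - 1)))
      limit_fun sequentially"
proof -
  fix K :: "complex set"
  assume "compact K"
  define a where "a z = (exp z + 1) / 2" for z :: complex
  have "compact (a ` K)"
    unfolding a_def using \<open>compact K\<close> by (intro compact_continuous_image continuous_intros) auto
  then have "uniform_limit K (\<lambda>n z. rGamma_seq n (a z)) (\<lambda>z. rGamma (a z)) sequentially"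
    by (intro uniform_limit_compose'[OF uniform_limit_rGamma_seq]) auto
  then show "uniform_limit K
      (\<lambda>n z. measure_pmf.expectation (X n) (\<lambda>k. exp (z * of_nat k))
              / exp (complex_of_real (ln (real n) / 2) * (exp z - 1)))
      limit_fun sequentially"
    unfolding a_def expectation_exp_mult_div_eq_rGamma_seq[OF assms] limit_fun_eq_rGamma[abs_def] .
qed

end
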